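(* Let $A=(-1,0)$ and $B=(1,0)$. For $x$ on the origin-centered circle of radius $r>1$, let $P^2(x)$ be defined by two steps. First, $y$ is the second intersection point of the line $xA$ with this circle. Then $P^2(x)$ is the second intersection point of the line $yB$ with this circle. Let $Y$ be the vector field on $\mathbb{R}^2\setminus\{0\}$ given in polar coordinates $(\alpha,r)$ by $$Y=-\frac{4\sin\alpha}{r}\,\frac{\partial}{\partial\alpha}.$$ Then, uniformly in $x$ with $|x|=r$, as $r\to\infty$, $$|P^2(x)-x-Y(x)|=O\Big(\frac{1}{r}\Big).$$
   Context: The vector $\partial/\partial\alpha$ at a point at distance $r$ from the origin has Euclidean length $r$. Hence $Y$ is tangent to origin-centered circles and has length $4|\sin\alpha|$. $O(1/r)$ as $r\to\infty$ means bounded in absolute value by $C/r$ for all $r\ge R$, for some constants $C$ and $R$. *)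

theory Defs
  imports "HOL-Analysis.Analysis"
begin

definition ptA :: complex where "ptA = -1"
definition ptB :: complex where "ptB = 1"

definition second_inter :: "complex \<Rightarrow> complex \<Rightarrow> complex" where
  "second_inter p x = (THE y. cmod y = cmod x \<and> y \<noteq> x \<and> collinear {x, p, y})"

definition P2 :: "complex \<Rightarrow> complex" where
  "P2 x = second_inter ptB (second_inter ptA x)"

text \<open>In polar coordinates (alpha, r), the coordinate vector d/d alpha at x is i*x
(derivative of r*cis alpha in alpha). Y = -(4 sin alpha / r) d/d alpha.\<close>
definition d_alpha :: "complex \<Rightarrow> complex" where
  "d_alpha x = \<i> * x"

definition Yfield :: "complex \<Rightarrow> complex" where
  "Yfield x = of_real (- 4 * sin (Arg x) / cmod x) * d_alpha x"

end

theory Submission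
  imports Defs
begin

text \<open>On the line through a point p inside the circle \<open>|z| = r\<close>, the second
intersection with the circle is \<open>p + (|p|\<^sup>2 - r\<^sup>2) / (cnj x - cnj p)\<close>
(power of the point p). Applying this with \<open>p = -1\<close> and then \<open>p = 1\<close> makes P2 an
explicit rational function of x, and so is Y, because \<open>r sin \<alpha> = (x - cnj x) / 2i\<close> and
\<open>x cnj x = r\<^sup>2\<close>. The error \<open>P2 x - x - Y x\<close> simplifies to
\<open>2 (x\<^sup>2 - r\<^sup>2) (2x + 1) / (r\<^sup>2 (r\<^sup>2 + 2x + 1))\<close>, whose numerator is \<open>O(r\<^sup>3)\<close>
and whose denominator is of order \<open>r\<^sup>4\<close>.\<close>

lemma norm_on_line_power2_diff:
  fixes p x :: complex and t :: real
  shows "(cmod (p + of_real t * (x - p)))\<^sup>2 - (cmod x)\<^sup>2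
           = (t - 1) * (t * (cmod (x - p))\<^sup>2 - ((cmod p)\<^sup>2 - (cmod x)\<^sup>2))"
  unfolding cmod_power2 by (simp add: algebra_simps power2_eq_square)

lemma second_inter_eq_line_point:
  fixes p x :: complex
  assumes inside: "cmod p < cmod x"
  defines "t \<equiv> ((cmod p)\<^sup>2 - (cmod x)\<^sup>2) / (cmod (x - p))\<^sup>2"
  shows "second_inter p x = p + of_real t * (x - p)"
proof -
  define y where "y = p + of_real t * (x - p)"
  have "x \<noteq> p" using inside by auto
  then have dist_pos: "(cmod (x - p))\<^sup>2 > 0" by simp
  have "(cmod p)\<^sup>2 < (cmod x)\<^sup>2" using inside by (simp add: power_strict_mono)
  then have "t < 0" unfolding t_def using dist_pos by (simp add: divide_neg_pos)
  have on_circle: "cmod (p + of_real u * (x - p)) = cmod x \<longleftrightarrow> u = 1 \<or> u = t" for u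
  proof -
    have "cmod (p + of_real u * (x - p)) = cmod x
          \<longleftrightarrow> (cmod (p + of_real u * (x - p)))\<^sup>2 - (cmod x)\<^sup>2 = 0"
      by (simp add: power2_eq_iff_nonneg)
    also have "\<dots> \<longleftrightarrow> u = 1 \<or> u * (cmod (x - p))\<^sup>2 = (cmod p)\<^sup>2 - (cmod x)\<^sup>2"
      unfolding norm_on_line_power2_diff by simp
    also have "\<dots> \<longleftrightarrow> u = 1 \<or> u = t"
      unfolding t_def using dist_pos by (auto simp: field_simps)
    finally show ?thesis .
  qed
  have at_x: "p + of_real u * (x - p) = x \<longleftrightarrow> u = 1" for u
  proof -
    have "p + of_real u * (x - p) = x \<longleftrightarrow> (of_real u - 1) * (x - p) = 0"
      by (auto simp: algebra_simps)
    then show ?thesis using \<open>x \<noteq> p\<close> by simp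
  qed
  have line: "collinear {x, p, z} \<longleftrightarrow> (\<exists>u. z = p + of_real u * (x - p))" for z
  proof -
    have "collinear {x, p, z} \<longleftrightarrow> collinear {x, z, p}" by (simp add: insert_commute)
    also have "\<dots> \<longleftrightarrow> (\<exists>u. z = u *\<^sub>R x + (1 - u) *\<^sub>R p)"
      using \<open>x \<noteq> p\<close> by (simp add: collinear_3_expand)
    also have "\<dots> \<longleftrightarrow> (\<exists>u. z = p + of_real u * (x - p))"
      by (simp add: scaleR_conv_of_real algebra_simps)
    finally show ?thesis .
  qed
  show ?thesis
    unfolding second_inter_def y_def[symmetric]
  proof (rule the_equality)
    show "cmod y = cmod x \<and> y \<noteq> x \<and> collinear {x, p, y}"
      using on_circle[of t] line[of y] at_x[of t] \<open>t < 0\<close> unfolding y_def by auto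
  next
    fix z assume "cmod z = cmod x \<and> z \<noteq> x \<and> collinear {x, p, z}"
    then obtain u where "z = p + of_real u * (x - p)" "cmod z = cmod x" "z \<noteq> x"
      using line by blast
    then show "z = y" using on_circle[of u] unfolding y_def by auto
  qed
qed

lemma norm_second_inter:
  fixes p x :: complex
  assumes inside: "cmod p < cmod x"
  shows "cmod (second_inter p x) = cmod x"
proof -
  have "(cmod (x - p))\<^sup>2 \<noteq> 0" using inside by auto
  then have "(cmod (second_inter p x))\<^sup>2 - (cmod x)\<^sup>2 = 0"
    unfolding second_inter_eq_line_point[OF inside] norm_on_line_power2_diff by simp
  then show ?thesis by (simp add: power2_eq_iff_nonneg)
qed

lemma second_inter_eq:
  fixes p x :: complex
  assumes inside: "cmod p < cmod x"
  shows "second_inter p x = p + of_real ((cmod p)\<^sup>2 - (cmod x)\<^sup>2) / (cnj x - cnj p)"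
proof -
  have "x - p \<noteq> 0" using inside by auto
  moreover have "of_real ((cmod (x - p))\<^sup>2) = (x - p) * (cnj x - cnj p)"
    by (subst complex_norm_square) simp
  ultimately show ?thesis
    unfolding second_inter_eq_line_point[OF inside] of_real_divide by simp
qed

lemma P2_eq:
  fixes x :: complex
  assumes outside: "cmod x > 1"
  defines "R \<equiv> of_real ((cmod x)\<^sup>2)"
  shows "P2 x = 1 - (1 - R) * (x + 1) / (R + 2 * x + 1)"
proof -
  define y where "y = second_inter ptA x"
  have "x + 1 \<noteq> 0"
    using outside by (metis add.inverse_inverse add_eq_0_iff norm_minus_cancel norm_one order_less_irrefl)
  have A_inside: "cmod ptA < cmod x" using outside by (simp add: ptA_def)
  then have "cmod y = cmod x" unfolding y_def by (rule norm_second_inter)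
  have y_eq: "y = -1 + (1 - R) / (cnj x + 1)"
    unfolding y_def R_def second_inter_eq[OF A_inside] by (simp add: ptA_def)
  have "cnj y = -1 + (1 - R) / (x + 1)" unfolding y_eq R_def by simp
  also have "\<dots> = - (x + R) / (x + 1)" using \<open>x + 1 \<noteq> 0\<close> by (simp add: field_simps)
  finally have cnj_y: "cnj y - 1 = - (R + 2 * x + 1) / (x + 1)"
    using \<open>x + 1 \<noteq> 0\<close> by (simp add: field_simps)
  have "cmod ptB < cmod y" using outside \<open>cmod y = cmod x\<close> by (simp add: ptB_def)
  then have "P2 x = 1 + (1 - R) / (cnj y - 1)"
    unfolding P2_def y_def[symmetric] R_def \<open>cmod y = cmod x\<close>[symmetric]
    by (simp add: second_inter_eq ptB_def)
  also have "\<dots> = 1 - (1 - R) * (x + 1) / (R + 2 * x + 1)"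
    unfolding cnj_y divide_divide_eq_right divide_minus_right by simp
  finally show ?thesis .
qed

lemma Yfield_eq:
  fixes x :: complex
  assumes x_nonzero: "x \<noteq> 0"
  defines "R \<equiv> of_real ((cmod x)\<^sup>2)"
  shows "Yfield x = - 2 * (x\<^sup>2 - R) / R"
proof -
  have "R = x * cnj x" unfolding R_def by (rule complex_norm_square)
  moreover have "of_real (Im x) = (x - cnj x) / (2 * \<i>)" by (simp add: complex_eq_iff)
  ultimately have "Yfield x = - 4 * ((x - cnj x) / (2 * \<i>)) / (x * cnj x) * (\<i> * x)"
    unfolding Yfield_def d_alpha_def sin_Arg[OF x_nonzero] R_def
    by (simp add: power2_eq_square)
  also have "\<dots> = - 2 * (x\<^sup>2 - R) / R"
    unfolding \<open>R = x * cnj x\<close> using x_nonzero by (simp add: field_simps power2_eq_square)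
  finally show ?thesis .
qed

lemma circle_denominator_nonzero:
  fixes x :: complex
  assumes "cmod x > 1"
  shows "of_real ((cmod x)\<^sup>2) + 2 * x + 1 \<noteq> 0"
proof
  assume "of_real ((cmod x)\<^sup>2) + 2 * x + 1 = 0"
  then have "2 * x = - of_real ((cmod x)\<^sup>2 + 1)" by (simp add: eq_neg_iff_add_eq_0 algebra_simps)
  then have "cmod (2 * x) = \<bar>(cmod x)\<^sup>2 + 1\<bar>" by (metis norm_minus_cancel norm_of_real)
  then have "2 * cmod x = (cmod x)\<^sup>2 + 1" by (simp add: norm_mult)
  then have "(cmod x - 1)\<^sup>2 = 0" by (simp add: power2_eq_square algebra_simps)
  then show False using assms by simp
qed

lemma P2_minus_Yfield_eq:
  fixes x :: complex
  assumes outside: "cmod x > 1"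
  defines "R \<equiv> of_real ((cmod x)\<^sup>2)"
  shows "P2 x - x - Yfield x = 2 * (x\<^sup>2 - R) * (2 * x + 1) / (R * (R + 2 * x + 1))"
proof -
  have "x \<noteq> 0" and "R \<noteq> 0" using outside unfolding R_def by auto
  have "R + 2 * x + 1 \<noteq> 0"
    unfolding R_def using outside by (rule circle_denominator_nonzero)
  have P2_x: "P2 x = 1 - (1 - R) * (x + 1) / (R + 2 * x + 1)"
    unfolding R_def using outside by (rule P2_eq)
  have Yfield_x: "Yfield x = - 2 * (x\<^sup>2 - R) / R"
    unfolding R_def using \<open>x \<noteq> 0\<close> by (rule Yfield_eq)
  show ?thesis unfolding P2_x Yfield_x
    using \<open>R \<noteq> 0\<close> \<open>R + 2 * x + 1 \<noteq> 0\<close> by (simp add: field_simps power2_eq_square)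
qed

lemma norm_P2_minus_Yfield_le:
  fixes x :: complex
  assumes large: "cmod x \<ge> 5"
  shows "cmod (P2 x - x - Yfield x) \<le> 24 / cmod x"
proof -
  define r where "r = cmod x"
  define R :: complex where "R = of_real (r\<^sup>2)"
  have "r \<ge> 5" and norm_R: "cmod R = r\<^sup>2"
    using large unfolding r_def R_def by (simp_all add: norm_power)
  have num1: "cmod (x\<^sup>2 - R) \<le> 2 * r\<^sup>2"
    using norm_triangle_ineq4[of "x\<^sup>2" R] norm_R by (simp add: norm_power r_def)
  have "cmod (2 * x + 1) \<le> 2 * r + 1"
    using norm_triangle_ineq[of "2 * x" 1] by (simp add: norm_mult r_def)
  moreover have "5 * r \<le> r\<^sup>2" using \<open>r \<ge> 5\<close> by (simp add: power2_eq_square)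
  ultimately have num2: "cmod (2 * x + 1) \<le> 3 * r" and den: "r\<^sup>2 / 2 \<le> cmod (R + 2 * x + 1)"
    using norm_triangle_ineq4[of "R + 2 * x + 1" "2 * x + 1"] norm_R \<open>r \<ge> 5\<close> by auto
  have "P2 x - x - Yfield x = 2 * (x\<^sup>2 - R) * (2 * x + 1) / (R * (R + 2 * x + 1))"
    unfolding R_def r_def using large by (intro P2_minus_Yfield_eq) simp
  then have "cmod (P2 x - x - Yfield x)
             = 2 * cmod (x\<^sup>2 - R) * cmod (2 * x + 1) / (r\<^sup>2 * cmod (R + 2 * x + 1))"
    by (simp only: norm_mult norm_divide norm_R norm_numeral)
  also have "\<dots> \<le> 2 * (2 * r\<^sup>2) * (3 * r) / (r\<^sup>2 * (r\<^sup>2 / 2))"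
    using num1 num2 den \<open>r \<ge> 5\<close> by (intro frac_le mult_mono mult_left_mono) auto
  also have "\<dots> = 24 / r" using \<open>r \<ge> 5\<close> by (simp add: field_simps power2_eq_square)
  finally show ?thesis unfolding r_def .
qed

theorem corollary4p12:
  shows "\<exists>C R. \<forall>r. r \<ge> R \<and> r > 1 \<longrightarrow>
           (\<forall>x::complex. cmod x = r \<longrightarrow> cmod (P2 x - x - Yfield x) \<le> C / r)"
  by (intro exI[of _ 24] exI[of _ 5]) (auto intro: norm_P2_minus_Yfield_le)

end
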